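(* Let $X$ be a compact Hausdorff space and $\phi_1,\dots,\phi_m$ real-valued continuous functions on $X$, and let $\mathcal C(X,1,\boldsymbol\phi)$ be the set of positive scalar Borel measures $\mu$ on $X$ with $\mu(X)=1$ and $\int_X\phi_i\,d\mu=0$ for $i=1,\dots,m$. Then $\mathcal C(X,1,\boldsymbol\phi)\neq\emptyset$ if and only if for some natural number $n$ with $1\le n\le m+1$ there exist $n$ distinct points $x_1,\dots,x_n\in X$ such that $0\in\mathbb R^m$ is an interior point of the convex hull of $\{\boldsymbol\phi(x_1),\dots,\boldsymbol\phi(x_n)\}$, where $\boldsymbol\phi(x_j)=(\phi_1(x_j),\dots,\phi_m(x_j))^T$.
   Context: A vector $v$ is an interior point of the convex hull of $\{u_1,\dots,u_n\}\subset\mathbb R^m$ if $v=\sum_j\lambda_ju_j$ with $\lambda_j>0$, $\sum_j\lambda_j=1$, and the coefficients $\lambda_1,\dots,\lambda_n$ are uniquely determined by these conditions. *)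

theory Defs
  imports "HOL-Analysis.Analysis" "HOL-Probability.Probability"
begin

text \<open>Vectors in R^m are represented as functions nat => real, only the
coordinates i < m being relevant. The family u_1..u_n is indexed by j < n.\<close>

definition interior_conv_point ::
  "nat \<Rightarrow> nat \<Rightarrow> (nat \<Rightarrow> nat \<Rightarrow> real) \<Rightarrow> (nat \<Rightarrow> real) \<Rightarrow> bool" where
  "interior_conv_point m n u v \<longleftrightarrow>
     (\<exists>l :: nat \<Rightarrow> real. (\<forall>j<n. l j > 0) \<and> (\<Sum>j<n. l j) = 1 \<and>
        (\<forall>i<m. v i = (\<Sum>j<n. l j * u j i))) \<and>
     (\<forall>l l' :: nat \<Rightarrow> real.
        ((\<forall>j<n. l j > 0) \<and> (\<Sum>j<n. l j) = 1 \<and> (\<forall>i<m. v i = (\<Sum>j<n. l j * u j i))) \<and>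
        ((\<forall>j<n. l' j > 0) \<and> (\<Sum>j<n. l' j) = 1 \<and> (\<forall>i<m. v i = (\<Sum>j<n. l' j * u j i)))
        \<longrightarrow> (\<forall>j<n. l j = l' j))"

definition moment_set :: "nat \<Rightarrow> (nat \<Rightarrow> 'a::topological_space \<Rightarrow> real) \<Rightarrow> 'a measure set" where
  "moment_set m phi = {\<mu>. sets \<mu> = sets (borel :: 'a measure) \<and>
      emeasure \<mu> (space \<mu>) = 1 \<and> (\<forall>i<m. (\<integral>x. phi i x \<partial>\<mu>) = 0)}"

end

theory Submission
  imports Defs
begin

text \<open>
  If a probability measure \<mu> has vanishing moments, let p be the point of least norm in the
  convex hull K of \<phi>(X). By Caratheodory's theorem K consists of the convex combinations of
  m + 1 points of the compact set \<phi>(X), so it is compact. Minimality of p against the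
  segments from p to the points \<phi>(x) gives |p|^2 \<le> \<langle>p, \<phi>(x)\<rangle> for every x; integrating against \<mu>
  yields |p|^2 \<le> 0, so 0 \<in> K. A representation of 0 by positive weights with inclusion-minimal
  support has affinely independent support, hence at most m + 1 points and unique weights.
  Conversely, the weights of such a representation define a discrete measure in the moment set.
\<close>

lemma homogeneous_system_nontrivial_solution:
  fixes u :: "'j \<Rightarrow> nat \<Rightarrow> real"
  assumes "finite J" "card J > k"
  shows "\<exists>d. (\<exists>j\<in>J. d j \<noteq> 0) \<and> (\<forall>i<k. (\<Sum>j\<in>J. d j * u j i) = 0)"
  using assms
proof (induction k arbitrary: J u)
  case 0
  then obtain j where "j \<in> J" by fastforce
  then show ?case by (intro exI[of _ "\<lambda>z. if z = j then 1 else 0"]) auto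
next
  case (Suc k)
  show ?case
  proof (cases "\<forall>j\<in>J. u j k = 0")
    case True
    from Suc.IH[of J u] Suc.prems obtain d where
      d: "\<exists>j\<in>J. d j \<noteq> 0" "\<forall>i<k. (\<Sum>j\<in>J. d j * u j i) = 0"
      by auto
    have "\<forall>i<Suc k. (\<Sum>j\<in>J. d j * u j i) = 0"
      using d(2) True by (auto simp: less_Suc_eq)
    with d(1) show ?thesis by blast
  next
    case False
    then obtain j0 where j0: "j0 \<in> J" "u j0 k \<noteq> 0" by blast
    define J' where "J' = J - {j0}"
    have fin': "finite J'" using Suc.prems by (simp add: J'_def)
    have card': "card J' > k" using Suc.prems j0 by (simp add: J'_def card_Diff_singleton)
    have J: "J = insert j0 J'" "j0 \<notin> J'" using j0 by (auto simp: J'_def)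
    \<comment> \<open>Gaussian elimination: clear coordinate k with the pivot j0 and recurse on the rest.\<close>
    define c where "c j = u j k / u j0 k" for j
    define u' where "u' j i = u j i - c j * u j0 i" for j i
    from Suc.IH[OF fin' card', of u'] obtain d' where
      d': "\<exists>j\<in>J'. d' j \<noteq> 0" "\<forall>i<k. (\<Sum>j\<in>J'. d' j * u' j i) = 0" by blast
    define d where "d z = (if z = j0 then - (\<Sum>j\<in>J'. d' j * c j) else d' z)" for z
    have sum_J: "(\<Sum>j\<in>J. d j * u j i) = d j0 * u j0 i + (\<Sum>j\<in>J'. d' j * u j i)" for i
    proof -
      have "(\<Sum>j\<in>J. d j * u j i) = d j0 * u j0 i + (\<Sum>j\<in>J'. d j * u j i)"
        unfolding J using fin' J(2) by simp
      also have "(\<Sum>j\<in>J'. d j * u j i) = (\<Sum>j\<in>J'. d' j * u j i)"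
        using J(2) by (intro sum.cong) (auto simp: d_def)
      finally show ?thesis .
    qed
    have "(\<Sum>j\<in>J. d j * u j i) = 0" if "i < Suc k" for i
    proof (cases "i < k")
      case True
      have "0 = (\<Sum>j\<in>J'. d' j * u' j i)" using d'(2) True by simp
      also have "\<dots> = (\<Sum>j\<in>J'. d' j * u j i) - (\<Sum>j\<in>J'. d' j * c j) * u j0 i"
        by (simp add: u'_def right_diff_distrib sum_subtractf sum_distrib_right
            mult.assoc mult.left_commute)
      finally show ?thesis using sum_J[of i] J(2) by (simp add: d_def)
    next
      case False
      then have "i = k" using that by simp
      moreover have "(\<Sum>j\<in>J'. d' j * c j) * u j0 k = (\<Sum>j\<in>J'. d' j * u j k)"
        using j0(2) by (simp add: sum_distrib_right c_def)
      ultimately show ?thesis using sum_J[of i] by (simp add: d_def)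
    qed
    moreover have "\<exists>j\<in>J. d j \<noteq> 0" using d'(1) J by (auto simp: d_def)
    ultimately show ?thesis by blast
  qed
qed

definition pos_convex_rep ::
    "('a \<Rightarrow> nat \<Rightarrow> real) \<Rightarrow> nat \<Rightarrow> (nat \<Rightarrow> real) \<Rightarrow> 'a set \<Rightarrow> ('a \<Rightarrow> real) \<Rightarrow> bool" where
  "pos_convex_rep v m y F w \<longleftrightarrow> finite F \<and> (\<forall>x\<in>F. 0 < w x) \<and> sum w F = 1 \<and>
     (\<forall>i<m. (\<Sum>x\<in>F. w x * v x i) = y i)"

lemma pos_convex_rep_shrink:
  assumes rep: "pos_convex_rep v m y F w" and "x1 \<in> F" "d x1 \<noteq> 0" and sum_d: "sum d F = 0"
    and moments_d: "\<forall>i<m. (\<Sum>x\<in>F. d x * v x i) = 0"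
  shows "\<exists>F' w'. F' \<subset> F \<and> pos_convex_rep v m y F' w'"
proof -
  have fin: "finite F" and w_pos: "\<And>x. x \<in> F \<Longrightarrow> 0 < w x" and sum_w: "sum w F = 1"
    and moments_w: "\<And>i. i < m \<Longrightarrow> (\<Sum>x\<in>F. w x * v x i) = y i"
    using rep by (auto simp: pos_convex_rep_def)
  define N where "N = {x\<in>F. d x < 0}"
  have "N \<noteq> {}"
  proof
    assume "N = {}"
    then have "\<forall>x\<in>F. 0 \<le> d x" by (auto simp: N_def not_less)
    with sum_d fin have "\<forall>x\<in>F. d x = 0" by (simp add: sum_nonneg_eq_0_iff)
    with \<open>x1 \<in> F\<close> \<open>d x1 \<noteq> 0\<close> show False by auto
  qed
  have fin_N: "finite N" using fin by (simp add: N_def)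
  \<comment> \<open>Move along d until the first weight hits zero.\<close>
  define t where "t = Min ((\<lambda>x. w x / (- d x)) ` N)"
  have "t \<in> (\<lambda>x. w x / (- d x)) ` N"
    unfolding t_def using fin_N \<open>N \<noteq> {}\<close> by (intro Min_in) auto
  then obtain x0 where x0: "x0 \<in> N" "t = w x0 / (- d x0)" by blast
  have t_le: "t \<le> w x / (- d x)" if "x \<in> N" for x
    using that fin_N by (auto simp: t_def)
  have t_pos: "t > 0" using x0 w_pos[of x0] by (auto simp: N_def divide_pos_neg)
  define w2 where "w2 x = w x + t * d x" for x
  have w2_nonneg: "0 \<le> w2 x" if "x \<in> F" for x
  proof (cases "d x < 0")
    case True
    then have "x \<in> N" using that by (simp add: N_def)
    from t_le[OF this] True have "t * (- d x) \<le> w x" by (simp add: field_simps)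
    then show ?thesis by (simp add: w2_def algebra_simps)
  next
    case False
    then show ?thesis using t_pos w_pos[OF that] by (simp add: w2_def)
  qed
  have "w2 x0 = 0" using x0 by (auto simp: w2_def N_def field_simps)
  define F' where "F' = {x\<in>F. 0 < w2 x}"
  have "x0 \<in> F" "x0 \<notin> F'" using x0 \<open>w2 x0 = 0\<close> by (auto simp: F'_def N_def)
  then have sub: "F' \<subset> F" by (auto simp: F'_def)
  have sum_F': "(\<Sum>x\<in>F'. f x * w2 x) = (\<Sum>x\<in>F. f x * w2 x)" for f :: "'a \<Rightarrow> real"
    using sub w2_nonneg by (intro sum.mono_neutral_left[OF fin]) (force simp: F'_def)+
  have "sum w2 F' = 1"
    using sum_F'[of "\<lambda>_. 1"] sum_w sum_d
    by (simp add: w2_def sum.distrib sum_distrib_left[symmetric])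
  moreover have "(\<Sum>x\<in>F'. w2 x * v x i) = y i" if "i < m" for i
  proof -
    have "(\<Sum>x\<in>F'. w2 x * v x i) = (\<Sum>x\<in>F. w2 x * v x i)"
      using sum_F'[of "\<lambda>x. v x i"] by (simp add: mult.commute)
    also have "\<dots> = (\<Sum>x\<in>F. w x * v x i) + t * (\<Sum>x\<in>F. d x * v x i)"
      by (simp add: w2_def algebra_simps sum.distrib sum_distrib_left)
    finally show ?thesis using moments_w[OF that] moments_d that by simp
  qed
  moreover have "finite F'" using fin by (simp add: F'_def)
  ultimately have "pos_convex_rep v m y F' w2" by (auto simp: pos_convex_rep_def F'_def)
  with sub show ?thesis by blast
qed

lemma pos_convex_rep_minimal:
  assumes "pos_convex_rep v m y F w"
  shows "\<exists>F' w'. F' \<subseteq> F \<and> pos_convex_rep v m y F' w' \<and> card F' \<le> Suc m \<and>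
           (\<forall>w''. pos_convex_rep v m y F' w'' \<longrightarrow> (\<forall>x\<in>F'. w'' x = w' x))"
  using assms
proof (induction "card F" arbitrary: F w rule: less_induct)
  case less
  have fin: "finite F" using less.prems by (simp add: pos_convex_rep_def)
  show ?case
  proof (cases "\<exists>F'' w''. F'' \<subset> F \<and> pos_convex_rep v m y F'' w''")
    case True
    then obtain F'' w'' where F'': "F'' \<subset> F" "pos_convex_rep v m y F'' w''" by blast
    have "card F'' < card F" using F''(1) fin by (simp add: psubset_card_mono)
    from less.hyps[OF this F''(2)] F''(1) show ?thesis by blast
  next
    case minimal: False
    have "card F \<le> Suc m"
    proof (rule ccontr)
      assume "\<not> card F \<le> Suc m"
      \<comment> \<open>More than m + 1 points are affinely dependent.\<close>
      with homogeneous_system_nontrivial_solution[OF fin, of "Suc m" "\<lambda>x i. if i < m then v x i else 1"]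
      obtain d where d: "\<exists>j\<in>F. d j \<noteq> 0"
        "\<forall>i<Suc m. (\<Sum>j\<in>F. d j * (if i < m then v j i else 1)) = 0"
        by auto
      have "sum d F = 0" using d(2)[rule_format, of m] by simp
      moreover have "\<forall>i<m. (\<Sum>x\<in>F. d x * v x i) = 0"
      proof (intro allI impI)
        fix i assume "i < m"
        then show "(\<Sum>x\<in>F. d x * v x i) = 0" using d(2)[rule_format, of i] by simp
      qed
      ultimately show False using pos_convex_rep_shrink[OF less.prems] d(1) minimal by blast
    qed
    moreover have "\<forall>w''. pos_convex_rep v m y F w'' \<longrightarrow> (\<forall>x\<in>F. w'' x = w x)"
    proof (intro allI impI ballI, rule ccontr)
      fix w'' x assume rep'': "pos_convex_rep v m y F w''" and x: "x \<in> F" "w'' x \<noteq> w x"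
      define d where "d z = w'' z - w z" for z
      have "sum d F = 0"
        using rep'' less.prems by (simp add: d_def pos_convex_rep_def sum_subtractf)
      moreover have "\<forall>i<m. (\<Sum>x\<in>F. d x * v x i) = 0"
        using rep'' less.prems
        by (simp add: d_def pos_convex_rep_def left_diff_distrib sum_subtractf)
      moreover have "d x \<noteq> 0" using x by (simp add: d_def)
      ultimately show False using pos_convex_rep_shrink[OF less.prems x(1)] minimal by blast
    qed
    ultimately show ?thesis using less.prems by blast
  qed
qed

definition convex_sum :: "'a set \<Rightarrow> ('a \<Rightarrow> real) \<Rightarrow> ('a \<Rightarrow> nat \<Rightarrow> real) \<Rightarrow> nat \<Rightarrow> real" where
  "convex_sum F w v = (\<lambda>i. \<Sum>x\<in>F. w x * v x i)"

definition convex_combs :: "('a \<Rightarrow> nat \<Rightarrow> real) \<Rightarrow> nat \<Rightarrow> (nat \<Rightarrow> real) set" where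
  "convex_combs v k = {convex_sum F w v | F w. finite F \<and> F \<noteq> {} \<and> card F \<le> Suc k \<and>
     (\<forall>x\<in>F. 0 \<le> w x) \<and> sum w F = 1}"

definition mix :: "('a \<Rightarrow> nat \<Rightarrow> real) \<Rightarrow> (nat \<Rightarrow> real) \<times> real \<times> 'a \<Rightarrow> nat \<Rightarrow> real" where
  "mix v = (\<lambda>(y, s, x). (\<lambda>i. (1 - s) * y i + s * v x i))"

lemma point_in_convex_combs: "v x \<in> convex_combs v k"
  unfolding convex_combs_def
  by (intro CollectI exI[of _ "{x}"] exI[of _ "\<lambda>_. 1"]) (simp add: convex_sum_def)

lemma convex_combs_0: "convex_combs v 0 = range v"
proof
  show "range v \<subseteq> convex_combs v 0" by (auto intro: point_in_convex_combs)
  show "convex_combs v 0 \<subseteq> range v"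
  proof
    fix y assume "y \<in> convex_combs v 0"
    then obtain F w where F: "y = convex_sum F w v" "finite F" "F \<noteq> {}" "card F \<le> 1" "sum w F = 1"
      by (auto simp: convex_combs_def)
    then have "card F = 1" by (simp add: Suc_leI card_gt_0_iff le_antisym)
    then obtain x where "F = {x}" by (auto simp: card_1_singleton_iff)
    with F show "y \<in> range v" by (auto simp: convex_sum_def)
  qed
qed

lemma mix_in_convex_combs_Suc:
  assumes "y \<in> convex_combs v k" and s: "0 \<le> s" "s \<le> 1"
  shows "mix v (y, s, x) \<in> convex_combs v (Suc k)"
proof -
  obtain F w where F: "y = convex_sum F w v" "finite F" "F \<noteq> {}" "card F \<le> Suc k"
    "\<forall>x\<in>F. 0 \<le> w x" "sum w F = 1"
    using assms(1) by (auto simp: convex_combs_def)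
  define w2 where "w2 z = (1 - s) * (if z \<in> F then w z else 0) + (if z = x then s else 0)" for z
  have sum_in_F: "(\<Sum>z\<in>insert x F. (if z \<in> F then f z else 0)) = sum f F" for f :: "'a \<Rightarrow> real"
    using F(2) by (simp add: sum.If_cases Int_absorb1 subset_insertI)
  have sum_at_x: "(\<Sum>z\<in>insert x F. (if z = x then f z else 0)) = f x" for f :: "'a \<Rightarrow> real"
    using F(2) by (simp add: sum.If_cases)
  have "sum w2 (insert x F) = (1 - s) * sum w F + s"
    unfolding w2_def sum.distrib sum_distrib_left[symmetric] sum_in_F
    using sum_at_x[of "\<lambda>_. s"] by simp
  moreover have "convex_sum (insert x F) w2 v = mix v (y, s, x)"
  proof
    fix i
    have "w2 z * v z i = (1 - s) * (if z \<in> F then w z * v z i else 0) + (if z = x then s * v z i else 0)"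
      for z
      by (simp add: w2_def algebra_simps)
    then have "convex_sum (insert x F) w2 v i =
        (1 - s) * (\<Sum>z\<in>insert x F. (if z \<in> F then w z * v z i else 0)) +
        (\<Sum>z\<in>insert x F. (if z = x then s * v z i else 0))"
      unfolding convex_sum_def by (simp add: sum.distrib sum_distrib_left)
    also have "\<dots> = (1 - s) * y i + s * v x i"
      using sum_in_F[of "\<lambda>z. w z * v z i"] sum_at_x[of "\<lambda>z. s * v z i"] F(1)
      by (simp add: convex_sum_def)
    finally show "convex_sum (insert x F) w2 v i = mix v (y, s, x) i" by (simp add: mix_def)
  qed
  moreover have "card (insert x F) \<le> Suc (Suc k)" using F(2,4) by (simp add: card_insert_if)
  moreover have "\<forall>z\<in>insert x F. 0 \<le> w2 z" using F(5) s by (auto simp: w2_def)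
  ultimately show ?thesis
    unfolding convex_combs_def using F by (intro CollectI exI[of _ "insert x F"] exI[of _ w2]) auto
qed

lemma convex_combs_Suc_subset:
  "convex_combs v (Suc k) \<subseteq> mix v ` (convex_combs v k \<times> ({0..1} \<times> UNIV))"
proof
  fix y assume "y \<in> convex_combs v (Suc k)"
  then obtain F w where F: "y = convex_sum F w v" "finite F" "F \<noteq> {}" "card F \<le> Suc (Suc k)"
    "\<forall>x\<in>F. 0 \<le> w x" "sum w F = 1"
    by (auto simp: convex_combs_def)
  obtain x where "x \<in> F" using F(3) by blast
  define F' where "F' = F - {x}"
  have fin': "finite F'" using F(2) by (simp add: F'_def)
  have F_eq: "F = insert x F'" "x \<notin> F'" using \<open>x \<in> F\<close> by (auto simp: F'_def)
  have sum_w: "w x + sum w F' = 1" using F(6) fin' F_eq by simp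
  have y: "y i = w x * v x i + (\<Sum>z\<in>F'. w z * v z i)" for i
    using F(1) fin' F_eq by (simp add: convex_sum_def)
  have "0 \<le> sum w F'" using F(5) F_eq by (auto intro: sum_nonneg)
  show "y \<in> mix v ` (convex_combs v k \<times> ({0..1} \<times> UNIV))"
  proof (cases "w x = 1")
    case True
    then have "sum w F' = 0" using sum_w by simp
    then have "\<forall>z\<in>F'. w z = 0" using F(5) F_eq fin' by (simp add: sum_nonneg_eq_0_iff)
    then have "y = mix v (v x, 1, x)" using True by (auto simp: y mix_def)
    then show ?thesis using point_in_convex_combs[of v x k] by force
  next
    case False
    have wx: "0 \<le> w x" "w x < 1" using F(5) \<open>x \<in> F\<close> \<open>0 \<le> sum w F'\<close> sum_w False by auto
    have "F' \<noteq> {}" using sum_w False by auto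
    define w' where "w' z = w z / (1 - w x)" for z
    have "sum w' F' = 1" using wx sum_w by (simp add: w'_def sum_divide_distrib[symmetric])
    moreover have "card F' \<le> Suc k" using F(4) F_eq fin' by simp
    moreover have "\<forall>z\<in>F'. 0 \<le> w' z" using F(5) F_eq wx by (auto simp: w'_def)
    ultimately have rest: "convex_sum F' w' v \<in> convex_combs v k"
      unfolding convex_combs_def using fin' \<open>F' \<noteq> {}\<close> by blast
    have "y = mix v (convex_sum F' w' v, w x, x)"
    proof
      fix i
      have "(1 - w x) * convex_sum F' w' v i = (\<Sum>z\<in>F'. w z * v z i)"
        using wx by (simp add: convex_sum_def w'_def sum_distrib_left)
      then show "y i = mix v (convex_sum F' w' v, w x, x) i" by (simp add: mix_def y)
    qed
    then show ?thesis using rest wx by force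
  qed
qed

lemma convex_combs_Suc: "convex_combs v (Suc k) = mix v ` (convex_combs v k \<times> ({0..1} \<times> UNIV))"
  using convex_combs_Suc_subset mix_in_convex_combs_Suc by fastforce

lemma compact_convex_combs:
  fixes v :: "'a::topological_space \<Rightarrow> nat \<Rightarrow> real"
  assumes compact: "compact (UNIV :: 'a set)" and cont: "\<And>i. continuous_on UNIV (\<lambda>x. v x i)"
  shows "compact (convex_combs v k)"
proof (induction k)
  case 0
  have "continuous_on UNIV v" using cont by (intro continuous_on_coordinatewise_then_product)
  then show ?case unfolding convex_combs_0 using compact by (rule compact_continuous_image)
next
  case (Suc k)
  have "continuous_on UNIV (\<lambda>z::(nat \<Rightarrow> real) \<times> real \<times> 'a. fst z i)" for i
    by (rule continuous_on_product_then_coordinatewise[OF continuous_on_fst[OF continuous_on_id]])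
  moreover have "continuous_on UNIV (\<lambda>z::(nat \<Rightarrow> real) \<times> real \<times> 'a. v (snd (snd z)) i)" for i
    by (rule continuous_on_compose2[OF cont[of i]]) (auto intro!: continuous_intros)
  ultimately have "continuous_on UNIV (mix v)"
    unfolding mix_def case_prod_beta
    by (intro continuous_on_coordinatewise_then_product continuous_intros)
  then have "continuous_on (convex_combs v k \<times> ({0..1} \<times> UNIV)) (mix v)"
    by (rule continuous_on_subset) auto
  moreover have "compact (convex_combs v k \<times> ({0..1::real} \<times> (UNIV :: 'a set)))"
    using Suc compact by (intro compact_Times compact_Icc)
  ultimately show ?case unfolding convex_combs_Suc by (rule compact_continuous_image)
qed

lemma convex_combs_imp_pos_convex_rep:
  assumes "y \<in> convex_combs v k"
  shows "\<exists>F w. pos_convex_rep v m y F w"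
proof -
  obtain F w where F: "y = convex_sum F w v" "finite F" "\<forall>x\<in>F. 0 \<le> w x" "sum w F = 1"
    using assms by (auto simp: convex_combs_def)
  define F0 where "F0 = {x\<in>F. 0 < w x}"
  have sum_F0: "(\<Sum>x\<in>F0. w x * f x) = (\<Sum>x\<in>F. w x * f x)" for f :: "'a \<Rightarrow> real"
    by (rule sum.mono_neutral_left) (use F in \<open>auto simp: F0_def\<close>)
  have "sum w F0 = 1" using sum_F0[of "\<lambda>_. 1"] F(4) by simp
  moreover have "(\<Sum>x\<in>F0. w x * v x i) = y i" for i
    using sum_F0[of "\<lambda>x. v x i"] F(1) by (simp add: convex_sum_def)
  ultimately have "pos_convex_rep v m y F0 w" using F(2) by (auto simp: pos_convex_rep_def F0_def)
  then show ?thesis by blast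
qed

lemma convex_combs_caratheodory:
  assumes v_zero: "\<And>x i. m \<le> i \<Longrightarrow> v x i = 0" and y: "y \<in> convex_combs v k"
  shows "y \<in> convex_combs v m"
proof -
  have y_zero: "y i = 0" if "m \<le> i" for i
    using y v_zero[OF that] by (auto simp: convex_combs_def convex_sum_def)
  obtain F w where "pos_convex_rep v m y F w" using convex_combs_imp_pos_convex_rep[OF y] by blast
  from pos_convex_rep_minimal[OF this] obtain F' w' where
    F': "pos_convex_rep v m y F' w'" "card F' \<le> Suc m"
    by blast
  have "y = convex_sum F' w' v"
  proof
    fix i show "y i = convex_sum F' w' v i"
      using F'(1) y_zero[of i] v_zero[of i]
      by (cases "i < m") (auto simp: pos_convex_rep_def convex_sum_def)
  qed
  moreover have "F' \<noteq> {}" "finite F'" "\<forall>x\<in>F'. 0 \<le> w' x" "sum w' F' = 1"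
    using F'(1) by (auto simp: pos_convex_rep_def less_imp_le)
  ultimately show ?thesis using F'(2) unfolding convex_combs_def by blast
qed

lemma le_of_quadratic_minimum:
  fixes a P Q :: real
  assumes min: "\<And>t. 0 < t \<Longrightarrow> t \<le> 1 \<Longrightarrow> a \<le> (1 - t)^2 * a + 2 * t * (1 - t) * P + t^2 * Q"
  shows "a \<le> P"
proof (rule ccontr)
  assume "\<not> a \<le> P"
  then have "P < a" by simp
  define C where "C = \<bar>a - 2 * P + Q\<bar> + 1"
  define t where "t = min 1 ((a - P) / C)"
  have "C > 0" by (simp add: C_def)
  have t: "0 < t" "t \<le> 1" using \<open>P < a\<close> \<open>C > 0\<close> by (auto simp: t_def)
  have "t * (a - 2 * P + Q) \<le> t * C" using t by (intro mult_left_mono) (auto simp: C_def)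
  also have "t * C \<le> a - P" using \<open>C > 0\<close> by (simp add: t_def min_def field_simps)
  finally have "2 * (P - a) + t * (a - 2 * P + Q) < 0" using \<open>P < a\<close> by (smt (verit))
  then have "t * (2 * (P - a) + t * (a - 2 * P + Q)) < 0" using t by (simp add: mult_pos_neg)
  moreover have "(1 - t)^2 * a + 2 * t * (1 - t) * P + t^2 * Q - a =
      t * (2 * (P - a) + t * (a - 2 * P + Q))"
    by (simp add: power2_eq_square algebra_simps)
  ultimately show False using min[OF t] by linarith
qed

lemma min_norm_convex_comb_le:
  assumes v_zero: "\<And>x i. m \<le> i \<Longrightarrow> v x i = 0" and p: "p \<in> convex_combs v m"
    and min: "\<And>y. y \<in> convex_combs v m \<Longrightarrow> (\<Sum>i<m. (p i)^2) \<le> (\<Sum>i<m. (y i)^2)"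
  shows "(\<Sum>i<m. (p i)^2) \<le> (\<Sum>i<m. p i * v x i)"
proof (rule le_of_quadratic_minimum)
  fix t :: real assume t: "0 < t" "t \<le> 1"
  have "mix v (p, t, x) \<in> convex_combs v m"
    using convex_combs_caratheodory[OF v_zero mix_in_convex_combs_Suc[OF p]] t by simp
  then have "(\<Sum>i<m. (p i)^2) \<le> (\<Sum>i<m. (mix v (p, t, x) i)^2)" by (rule min)
  also have "\<dots> = (\<Sum>i<m. (1 - t)^2 * (p i)^2 + 2 * t * (1 - t) * (p i * v x i) + t^2 * (v x i)^2)"
    by (intro sum.cong) (auto simp: mix_def power2_eq_square algebra_simps)
  also have "\<dots> = (1 - t)^2 * (\<Sum>i<m. (p i)^2) + 2 * t * (1 - t) * (\<Sum>i<m. p i * v x i) +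
      t^2 * (\<Sum>i<m. (v x i)^2)"
    by (simp add: sum.distrib sum_distrib_left)
  finally show "(\<Sum>i<m. (p i)^2) \<le> (1 - t)^2 * (\<Sum>i<m. (p i)^2) +
      2 * t * (1 - t) * (\<Sum>i<m. p i * v x i) + t^2 * (\<Sum>i<m. (v x i)^2)" .
qed

lemma zero_mean_imp_pos_convex_rep:
  fixes v :: "'a::topological_space \<Rightarrow> nat \<Rightarrow> real"
  assumes compact: "compact (UNIV :: 'a set)" and cont: "\<And>i. continuous_on UNIV (\<lambda>x. v x i)"
    and v_zero: "\<And>x i. m \<le> i \<Longrightarrow> v x i = 0"
    and "prob_space \<mu>" and sets_\<mu>: "sets \<mu> = sets borel"
    and mean: "\<And>i. i < m \<Longrightarrow> (\<integral>x. v x i \<partial>\<mu>) = 0"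
  shows "\<exists>F w. pos_convex_rep v m (\<lambda>_. 0) F w"
proof -
  interpret prob_space \<mu> by fact
  have integrable: "integrable \<mu> (\<lambda>x. v x i)" for i
  proof -
    obtain B where B: "\<And>x. x \<in> UNIV \<Longrightarrow> norm (v x i) \<le> B"
      using continuous_on_compact_bound[OF compact cont] by metis
    have measurable: "(\<lambda>x. v x i) \<in> borel_measurable \<mu>"
      using borel_measurable_continuous_onI[OF cont] measurable_cong_sets[OF sets_\<mu> refl]
      by (metis (no_types))
    show ?thesis by (rule integrable_const_bound[where B = B]) (use B measurable in auto)
  qed
  define N where "N y = (\<Sum>i<m. (y i)^2)" for y :: "nat \<Rightarrow> real"
  have "\<exists>p\<in>convex_combs v m. \<forall>y\<in>convex_combs v m. N p \<le> N y"
  proof (rule continuous_attains_inf)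
    show "compact (convex_combs v m)" using compact cont by (rule compact_convex_combs)
    show "convex_combs v m \<noteq> {}" using point_in_convex_combs[of v undefined m] by blast
    show "continuous_on (convex_combs v m) N"
      unfolding N_def
      by (intro continuous_intros continuous_on_product_then_coordinatewise[OF continuous_on_id])
  qed
  then obtain p where p: "p \<in> convex_combs v m" "\<And>y. y \<in> convex_combs v m \<Longrightarrow> N p \<le> N y"
    by blast
  have "N p = (\<integral>x. N p \<partial>\<mu>)" by (simp add: prob_space)
  also have "\<dots> \<le> (\<integral>x. (\<Sum>i<m. p i * v x i) \<partial>\<mu>)"
    using min_norm_convex_comb_le[OF v_zero p(1)] p(2) integrable
    by (intro integral_mono) (auto simp: N_def)
  also have "\<dots> = (\<Sum>i<m. p i * (\<integral>x. v x i \<partial>\<mu>))"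
    using integrable by (simp add: integral_sum)
  also have "\<dots> = 0" using mean by simp
  finally have "N p \<le> 0" .
  moreover have "N p \<ge> 0" by (simp add: N_def sum_nonneg)
  ultimately have "N p = 0" by simp
  then have "\<forall>i<m. p i = 0" by (simp add: N_def sum_nonneg_eq_0_iff)
  moreover obtain F w where "pos_convex_rep v m p F w"
    using convex_combs_imp_pos_convex_rep[OF p(1)] by blast
  ultimately have "pos_convex_rep v m (\<lambda>_. 0) F w" by (simp add: pos_convex_rep_def)
  then show ?thesis by blast
qed

lemma pos_convex_rep_reindex:
  fixes h :: "nat \<Rightarrow> 'a"
  assumes h: "bij_betw h {..<n} F"
  shows "pos_convex_rep v m y F w \<longleftrightarrow> (\<forall>j<n. 0 < w (h j)) \<and> (\<Sum>j<n. w (h j)) = 1 \<and>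
    (\<forall>i<m. y i = (\<Sum>j<n. w (h j) * v (h j) i))"
proof -
  have "finite F" using bij_betw_finite[OF h] by simp
  moreover have "(\<forall>x\<in>F. 0 < w x) \<longleftrightarrow> (\<forall>j<n. 0 < w (h j))"
    using bij_betw_imp_surj_on[OF h] by auto
  moreover have reindex: "(\<Sum>j<n. f (h j)) = sum f F" for f :: "'a \<Rightarrow> real"
    using sum.reindex_bij_betw[OF h] .
  moreover have "(\<Sum>j<n. w (h j) * v (h j) i) = (\<Sum>x\<in>F. w x * v x i)" for i
    using reindex[of "\<lambda>x. w x * v x i"] .
  then have "(\<forall>i<m. (\<Sum>x\<in>F. w x * v x i) = y i) \<longleftrightarrow>
      (\<forall>i<m. y i = (\<Sum>j<n. w (h j) * v (h j) i))"
    by auto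
  ultimately show ?thesis unfolding pos_convex_rep_def by simp
qed

lemma pos_convex_rep_imp_interior_conv_point:
  assumes "pos_convex_rep v m y F0 w0"
  shows "\<exists>n h. 1 \<le> n \<and> n \<le> m + 1 \<and> inj_on h {..<n} \<and> interior_conv_point m n (\<lambda>j. v (h j)) y"
proof -
  obtain F w where rep: "pos_convex_rep v m y F w" and card: "card F \<le> Suc m"
    and unique: "\<forall>w'. pos_convex_rep v m y F w' \<longrightarrow> (\<forall>x\<in>F. w' x = w x)"
    using pos_convex_rep_minimal[OF assms] by blast
  have "finite F" "F \<noteq> {}" using rep by (auto simp: pos_convex_rep_def)
  define n where "n = card F"
  obtain h where h: "bij_betw h {..<n} F"
    using ex_bij_betw_nat_finite[OF \<open>finite F\<close>] by (auto simp: n_def atLeast0LessThan)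
  define P where "P l \<longleftrightarrow> (\<forall>j<n. 0 < l j) \<and> (\<Sum>j<n. l j) = 1 \<and>
    (\<forall>i<m. y i = (\<Sum>j<n. l j * v (h j) i))" for l :: "nat \<Rightarrow> real"
  have rep_iff: "pos_convex_rep v m y F w' \<longleftrightarrow> P (\<lambda>j. w' (h j))" for w'
    unfolding P_def by (rule pos_convex_rep_reindex[OF h])
  have "P (\<lambda>j. w (h j))" using rep rep_iff by blast
  have "l j = w (h j)" if "P l" "j < n" for l j
  proof -
    define w' where "w' x = l (the_inv_into {..<n} h x)" for x
    have w'_h: "w' (h j) = l j" if "j < n" for j
      using that bij_betw_imp_inj_on[OF h] by (simp add: w'_def the_inv_into_f_f)
    have "(\<Sum>j<n. w' (h j) * f j) = (\<Sum>j<n. l j * f j)" for f :: "nat \<Rightarrow> real"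
      by (intro sum.cong) (auto simp: w'_h)
    from this[of "\<lambda>_. 1"] this have "P (\<lambda>j. w' (h j)) = P l"
      unfolding P_def by (simp add: w'_h)
    then have "pos_convex_rep v m y F w'" using rep_iff \<open>P l\<close> by simp
    then have "\<forall>x\<in>F. w' x = w x" using unique by blast
    then show ?thesis using w'_h[OF \<open>j < n\<close>] bij_betw_apply[OF h] \<open>j < n\<close> by force
  qed
  then have "\<forall>l l'. P l \<and> P l' \<longrightarrow> (\<forall>j<n. l j = l' j)" by metis
  with \<open>P (\<lambda>j. w (h j))\<close> have "interior_conv_point m n (\<lambda>j. v (h j)) y"
    unfolding interior_conv_point_def P_def[symmetric] by blast
  moreover have "1 \<le> n" using \<open>finite F\<close> \<open>F \<noteq> {}\<close> by (simp add: n_def Suc_le_eq card_gt_0_iff)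
  moreover have "n \<le> m + 1" using card by (simp add: n_def)
  ultimately show ?thesis using bij_betw_imp_inj_on[OF h] by blast
qed

lemma interior_conv_point_cong:
  assumes "\<And>j i. j < n \<Longrightarrow> i < m \<Longrightarrow> u j i = u' j i"
  shows "interior_conv_point m n u y = interior_conv_point m n u' y"
proof -
  have "(\<forall>i<m. y i = (\<Sum>j<n. l j * u j i)) \<longleftrightarrow> (\<forall>i<m. y i = (\<Sum>j<n. l j * u' j i))"
    for l :: "nat \<Rightarrow> real"
    using assms by (metis (no_types, lifting) lessThan_iff sum.cong)
  then show ?thesis unfolding interior_conv_point_def by (simp only:)
qed

lemma interior_conv_point_imp_moment_set:
  fixes phi :: "nat \<Rightarrow> 'a::topological_space \<Rightarrow> real"
  assumes icp: "interior_conv_point m n (\<lambda>j i. phi i (x j)) (\<lambda>_. 0)"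
    and measurable: "\<And>i. i < m \<Longrightarrow> phi i \<in> borel_measurable borel"
  shows "moment_set m phi \<noteq> {}"
proof -
  obtain l where l: "\<forall>j<n. l j > 0" "(\<Sum>j<n. l j) = 1"
    "\<forall>i<m. (0::real) = (\<Sum>j<n. l j * phi i (x j))"
    using icp unfolding interior_conv_point_def by (elim conjE exE) simp
  define xs where "xs = map (\<lambda>j. (x j, l j)) [0..<n]"
  have wf: "pmf_of_list_wf xs"
    using l(1,2)
    by (auto simp: pmf_of_list_wf_def xs_def o_def sum_set_upt_conv_sum_list_nat[symmetric]
        atLeast0LessThan less_imp_le)
  define p where "p = pmf_of_list xs"
  define \<mu> where "\<mu> = distr (measure_pmf p) (borel :: 'a measure) id"
  have pmf_p: "pmf p a = (\<Sum>j<n. if x j = a then l j else 0)" for a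
    using wf unfolding p_def
    by (simp add: pmf_pmf_of_list xs_def filter_map o_def sum_list_map_filter'
        sum_set_upt_conv_sum_list_nat[symmetric] atLeast0LessThan)
  have "\<mu> \<in> moment_set m phi"
    unfolding moment_set_def
  proof (intro CollectI conjI allI impI)
    show "sets \<mu> = sets borel" by (simp add: \<mu>_def)
    show "emeasure \<mu> (space \<mu>) = 1"
      by (simp add: \<mu>_def emeasure_distr measure_pmf.emeasure_space_1)
    fix i assume i: "i < m"
    have "(\<integral>z. phi i z \<partial>\<mu>) = (\<integral>z. phi i z \<partial>measure_pmf p)"
      unfolding \<mu>_def using measurable[OF i] by (subst integral_distr) auto
    also have "\<dots> = (\<Sum>a\<in>x ` {..<n}. phi i a * pmf p a)"
    proof (rule integral_measure_pmf_real)
      fix a assume "a \<in> set_pmf p" "phi i a \<noteq> 0"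
      then show "a \<in> x ` {..<n}" using set_pmf_of_list[OF wf] by (auto simp: p_def xs_def)
    qed simp
    also have "\<dots> = (\<Sum>a\<in>x ` {..<n}. \<Sum>j<n. if x j = a then l j * phi i a else 0)"
      by (simp add: pmf_p sum_distrib_left if_distrib mult.commute cong: if_cong)
    also have "\<dots> = (\<Sum>j<n. \<Sum>a\<in>x ` {..<n}. if x j = a then l j * phi i a else 0)"
      by (rule sum.swap)
    also have "\<dots> = (\<Sum>j<n. l j * phi i (x j))"
      by (intro sum.cong refl) (simp add: sum.delta)
    finally show "(\<integral>z. phi i z \<partial>\<mu>) = 0" using l(3) i by simp
  qed
  then show ?thesis by blast
qed

theorem corollary3p4:
  fixes m :: nat and phi :: "nat \<Rightarrow> 'a::t2_space \<Rightarrow> real"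
  assumes "compact (UNIV :: 'a set)"
    and "\<And>i. i < m \<Longrightarrow> continuous_on UNIV (phi i)"
  shows "moment_set m phi \<noteq> {} \<longleftrightarrow>
    (\<exists>n x. 1 \<le> n \<and> n \<le> m + 1 \<and> inj_on x {..<n} \<and>
       interior_conv_point m n (\<lambda>j i. phi i (x j)) (\<lambda>i. 0))"
proof
  assume "moment_set m phi \<noteq> {}"
  then obtain \<mu> where \<mu>: "sets \<mu> = sets borel" "emeasure \<mu> (space \<mu>) = 1"
    "\<And>i. i < m \<Longrightarrow> (\<integral>x. phi i x \<partial>\<mu>) = 0"
    by (auto simp: moment_set_def)
  define V where "V x i = (if i < m then phi i x else 0)" for x i
  have "continuous_on UNIV (\<lambda>x. V x i)" for i
    using assms(2)[of i] by (cases "i < m") (auto simp: V_def)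
  moreover have "V x i = 0" if "m \<le> i" for x i using that by (simp add: V_def)
  moreover have "(\<integral>x. V x i \<partial>\<mu>) = 0" if "i < m" for i using \<mu>(3) that by (simp add: V_def)
  ultimately obtain F w where "pos_convex_rep V m (\<lambda>_. 0) F w"
    using zero_mean_imp_pos_convex_rep[OF assms(1) _ _ prob_spaceI[OF \<mu>(2)] \<mu>(1)] by blast
  from pos_convex_rep_imp_interior_conv_point[OF this] obtain n x where
    "1 \<le> n" "n \<le> m + 1" "inj_on x {..<n}" "interior_conv_point m n (\<lambda>j. V (x j)) (\<lambda>_. 0)"
    by blast
  moreover have "interior_conv_point m n (\<lambda>j. V (x j)) (\<lambda>_. 0) =
      interior_conv_point m n (\<lambda>j i. phi i (x j)) (\<lambda>_. 0)"
    by (rule interior_conv_point_cong) (simp add: V_def)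
  ultimately show "\<exists>n x. 1 \<le> n \<and> n \<le> m + 1 \<and> inj_on x {..<n} \<and>
      interior_conv_point m n (\<lambda>j i. phi i (x j)) (\<lambda>i. 0)"
    by auto
next
  assume "\<exists>n x. 1 \<le> n \<and> n \<le> m + 1 \<and> inj_on x {..<n} \<and>
      interior_conv_point m n (\<lambda>j i. phi i (x j)) (\<lambda>i. 0)"
  then obtain n x where "interior_conv_point m n (\<lambda>j i. phi i (x j)) (\<lambda>i. 0)" by blast
  then show "moment_set m phi \<noteq> {}"
    by (rule interior_conv_point_imp_moment_set) (rule borel_measurable_continuous_onI[OF assms(2)])
qed

end
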